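(* Let $R$ be a regular expression with no concatenation under star. Let $R'$ be obtained from $R$ by deleting all Kleene stars that are nested inside another Kleene star and deleting every occurrence of $\varepsilon$ that appears inside a Kleene star. Then $Gl(R)=Gl(R')$.
   Context: Regular expressions over $\Sigma$: $R::=\varepsilon\mid a\mid R^*\mid R\cdot R\mid R+R$ ($a\in\Sigma$). $R$ has no concatenation under star if no concatenation operator occurs in any subexpression nested under a Kleene star. A linearisation of $R$ replaces each atom occurrence by a distinct fresh symbol (position) from an alphabet $\Gamma$ (the same positions serving for $R$ and $R'$, which have the same atom occurrences), $\overline\alpha$ denoting the original letter. The Glushkov automaton $Gl(R)$ is the trim part of $(\Sigma,\{i\}\uplus\Gamma,\Delta,\{i\},F)$ with $\Delta=\{(\alpha,\overline\beta,\beta):\exists u,v\in\Gamma^*,\ u\alpha\beta v\in L(R_{\mathrm{lin}})\}\cup\{(i,\overline\alpha,\alpha):\exists u,\ \alpha u\in L(R_{\mathrm{lin}})\}$ and $F=\{\alpha:\exists u,\ u\alpha\in L(R_{\mathrm{lin}})\}\cup(\{i\}$ if $\varepsilon\in L(R_{\mathrm{lin}}))$, where $R_{\mathrm{lin}}$ is the linearisation. *)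

theory Defs
  imports Main
begin

datatype 'a rexp = Eps | Atom 'a | Star "'a rexp" | Conc "'a rexp" "'a rexp" | Plus "'a rexp" "'a rexp"

definition conc_lang :: "'a list set \<Rightarrow> 'a list set \<Rightarrow> 'a list set" where
  "conc_lang A B = {u @ v | u v. u \<in> A \<and> v \<in> B}"

inductive_set star_lang :: "'a list set \<Rightarrow> 'a list set" for A where
  star_nil: "[] \<in> star_lang A"
| star_app: "u \<in> A \<Longrightarrow> v \<in> star_lang A \<Longrightarrow> u @ v \<in> star_lang A"

fun lang :: "'a rexp \<Rightarrow> 'a list set" where
  "lang Eps = {[]}"
| "lang (Atom a) = {[a]}"
| "lang (Star r) = star_lang (lang r)"
| "lang (Conc r s) = conc_lang (lang r) (lang s)"
| "lang (Plus r s) = lang r \<union> lang s"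

fun has_conc :: "'a rexp \<Rightarrow> bool" where
  "has_conc Eps = False"
| "has_conc (Atom a) = False"
| "has_conc (Star r) = has_conc r"
| "has_conc (Conc r s) = True"
| "has_conc (Plus r s) = (has_conc r \<or> has_conc s)"

fun no_conc_under_star :: "'a rexp \<Rightarrow> bool" where
  "no_conc_under_star Eps = True"
| "no_conc_under_star (Atom a) = True"
| "no_conc_under_star (Star r) = (\<not> has_conc r)"
| "no_conc_under_star (Conc r s) = (no_conc_under_star r \<and> no_conc_under_star s)"
| "no_conc_under_star (Plus r s) = (no_conc_under_star r \<and> no_conc_under_star s)"

text \<open>Inside a star: remove all stars and all epsilon occurrences. The result is None
  if nothing remains (the subexpression consisted only of epsilons/stars).\<close>
fun strip_in_star :: "'a rexp \<Rightarrow> 'a rexp option" where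
  "strip_in_star Eps = None"
| "strip_in_star (Atom a) = Some (Atom a)"
| "strip_in_star (Star r) = strip_in_star r"
| "strip_in_star (Plus r s) = (case (strip_in_star r, strip_in_star s) of
      (None, y) \<Rightarrow> y | (x, None) \<Rightarrow> x | (Some x, Some y) \<Rightarrow> Some (Plus x y))"
| "strip_in_star (Conc r s) = (case (strip_in_star r, strip_in_star s) of
      (None, y) \<Rightarrow> y | (x, None) \<Rightarrow> x | (Some x, Some y) \<Rightarrow> Some (Conc x y))"

fun simplify_stars :: "'a rexp \<Rightarrow> 'a rexp" where
  "simplify_stars Eps = Eps"
| "simplify_stars (Atom a) = Atom a"
| "simplify_stars (Star r) = (case strip_in_star r of None \<Rightarrow> Eps | Some r' \<Rightarrow> Star r')"
| "simplify_stars (Conc r s) = Conc (simplify_stars r) (simplify_stars s)"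
| "simplify_stars (Plus r s) = Plus (simplify_stars r) (simplify_stars s)"

fun natoms :: "'a rexp \<Rightarrow> nat" where
  "natoms Eps = 0"
| "natoms (Atom a) = 1"
| "natoms (Star r) = natoms r"
| "natoms (Conc r s) = natoms r + natoms s"
| "natoms (Plus r s) = natoms r + natoms s"

text \<open>Positions are pairs (letter, index of the atom occurrence from left to right);
  the original letter of a position is its first component.\<close>
fun lin_from :: "nat \<Rightarrow> 'a rexp \<Rightarrow> ('a \<times> nat) rexp" where
  "lin_from n Eps = Eps"
| "lin_from n (Atom a) = Atom (a, n)"
| "lin_from n (Star r) = Star (lin_from n r)"
| "lin_from n (Conc r s) = Conc (lin_from n r) (lin_from (n + natoms r) s)"
| "lin_from n (Plus r s) = Plus (lin_from n r) (lin_from (n + natoms r) s)"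

definition lin :: "'a rexp \<Rightarrow> ('a \<times> nat) rexp" where
  "lin r = lin_from 0 r"

fun atoms :: "'a rexp \<Rightarrow> 'a set" where
  "atoms Eps = {}"
| "atoms (Atom a) = {a}"
| "atoms (Star r) = atoms r"
| "atoms (Conc r s) = atoms r \<union> atoms s"
| "atoms (Plus r s) = atoms r \<union> atoms s"

text \<open>An automaton (states, transitions, initial states, final states).\<close>
type_synonym ('q, 'a) nfa = "'q set \<times> ('q \<times> 'a \<times> 'q) set \<times> 'q set \<times> 'q set"

definition trim :: "('q, 'a) nfa \<Rightarrow> ('q, 'a) nfa" where
  "trim A = (case A of (Q, D, I, F) \<Rightarrow>
     let E = {(p, q). \<exists>a. (p, a, q) \<in> D \<and> p \<in> Q \<and> q \<in> Q};
         Q' = {q \<in> Q. (\<exists>i \<in> I \<inter> Q. (i, q) \<in> E\<^sup>*) \<and> (\<exists>f \<in> F \<inter> Q. (q, f) \<in> E\<^sup>*)}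
     in (Q', {(p, a, q) \<in> D. p \<in> Q' \<and> q \<in> Q'}, I \<inter> Q', F \<inter> Q'))"

text \<open>State None is the initial state i; Some alpha is the position alpha.\<close>
definition glushkov :: "'a rexp \<Rightarrow> (('a \<times> nat) option, 'a) nfa" where
  "glushkov r = (let L = lang (lin r); \<Gamma> = atoms (lin r) in
     trim (insert None (Some ` \<Gamma>),
           {(Some \<alpha>, fst \<beta>, Some \<beta>) | \<alpha> \<beta>. \<exists>u v. u @ [\<alpha>, \<beta>] @ v \<in> L}
             \<union> {(None, fst \<alpha>, Some \<alpha>) | \<alpha>. \<exists>u. \<alpha> # u \<in> L},
           {None},
           {Some \<alpha> | \<alpha>. \<exists>u. u @ [\<alpha>] \<in> L} \<union> (if [] \<in> L then {None} else {})))"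

end

theory Submission
  imports Defs
begin

text \<open>The Glushkov automaton of R depends only on the language and the set of positions of the
  linearisation of R. Since a star body without concatenation denotes only words of length at
  most one and contains every one of its positions as a one-letter word, its star is the set of
  all words over its positions. Deleting nested stars and epsilons under a star keeps the
  positions (in order, hence with the same numbering), so the star of the stripped body denotes
  the same set, and the linearised languages of R and R' coincide.\<close>

lemma star_lang_eq_lists:
  assumes "A \<subseteq> lists B" and "\<And>x. x \<in> B \<Longrightarrow> [x] \<in> A"
  shows "star_lang A = lists B"
proof
  show "star_lang A \<subseteq> lists B"
  proof
    fix w assume "w \<in> star_lang A"
    then show "w \<in> lists B"
      by (induction rule: star_lang.induct) (use assms(1) in auto)
  qed
  show "lists B \<subseteq> star_lang A"
  proof
    fix w assume "w \<in> lists B"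
    then show "w \<in> star_lang A"
    proof (induction w)
      case Nil
      show ?case by (rule star_lang.star_nil)
    next
      case (Cons x w)
      then show ?case using star_lang.star_app[of "[x]" A w] assms(2) by auto
    qed
  qed
qed

lemma lang_subset_lists_atoms: "lang r \<subseteq> lists (atoms r)"
proof (induction r)
  case (Star r)
  have "w \<in> lists (atoms r)" if "w \<in> star_lang (lang r)" for w
    using that by (induction rule: star_lang.induct) (use Star.IH in auto)
  then show ?case by auto
next
  case (Conc r s)
  then show ?case by (fastforce simp: conc_lang_def)
qed auto

lemma singleton_in_lang: "\<not> has_conc r \<Longrightarrow> a \<in> atoms r \<Longrightarrow> [a] \<in> lang r"
  by (induction r) (use star_lang.star_app[OF _ star_lang.star_nil, of "[a]"] in auto)

lemma lang_Star_no_conc: "\<not> has_conc r \<Longrightarrow> lang (Star r) = lists (atoms r)"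
  using star_lang_eq_lists[OF lang_subset_lists_atoms singleton_in_lang] by simp

lemma has_conc_lin_from [simp]: "has_conc (lin_from n r) = has_conc r"
  by (induction r arbitrary: n) auto

lemma has_conc_strip_in_star: "strip_in_star r = Some r' \<Longrightarrow> \<not> has_conc r \<Longrightarrow> \<not> has_conc r'"
  by (induction r arbitrary: r') (auto split: option.splits)

lemma strip_in_star_None: "strip_in_star r = None \<Longrightarrow> natoms r = 0 \<and> atoms (lin_from n r) = {}"
  by (induction r arbitrary: n) (auto split: option.splits)

lemma natoms_strip_in_star: "strip_in_star r = Some r' \<Longrightarrow> natoms r' = natoms r"
  by (induction r arbitrary: r') (auto split: option.splits dest: strip_in_star_None)

lemma atoms_lin_from_strip_in_star:
  "strip_in_star r = Some r' \<Longrightarrow> atoms (lin_from n r') = atoms (lin_from n r)"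
proof (induction r arbitrary: n r')
  case (Conc r s)
  then show ?case
    by (auto split: option.splits dest: strip_in_star_None simp: natoms_strip_in_star)
next
  case (Plus r s)
  then show ?case
    by (auto split: option.splits dest: strip_in_star_None simp: natoms_strip_in_star)
qed auto

lemma natoms_simplify_stars [simp]: "natoms (simplify_stars r) = natoms r"
  by (induction r) (auto split: option.splits dest: strip_in_star_None natoms_strip_in_star)

lemma atoms_lin_from_simplify_stars:
  "atoms (lin_from n (simplify_stars r)) = atoms (lin_from n r)"
  by (induction r arbitrary: n)
    (auto split: option.splits dest: strip_in_star_None atoms_lin_from_strip_in_star)

lemma lang_lin_from_simplify_stars:
  "no_conc_under_star r \<Longrightarrow> lang (lin_from n (simplify_stars r)) = lang (lin_from n r)"
proof (induction r arbitrary: n)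
  case (Star r)
  then have no_conc: "\<not> has_conc r" by simp
  then have lang_Star: "lang (lin_from n (Star r)) = lists (atoms (lin_from n r))"
    using lang_Star_no_conc[of "lin_from n r"] by simp
  show ?case
  proof (cases "strip_in_star r")
    case None
    then show ?thesis using strip_in_star_None[OF None, of n] lang_Star by simp
  next
    case (Some r')
    then have "\<not> has_conc r'" using has_conc_strip_in_star no_conc by blast
    then show ?thesis
      using Some lang_Star lang_Star_no_conc[of "lin_from n r'"]
        atoms_lin_from_strip_in_star[OF Some] by simp
  qed
qed auto

theorem lemmaD50:
  fixes R :: "'a rexp"
  assumes "no_conc_under_star R"
  shows "glushkov R = glushkov (simplify_stars R)"
  unfolding glushkov_def lin_def
  by (simp add: lang_lin_from_simplify_stars[OF assms] atoms_lin_from_simplify_stars)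

end
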